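(* Let $X$ be a finite $T_0$ space and $\mathbb{B}(X)=\{U_x\mid x\in X\}$. If $\mathcal{U}\in Cov(X)$ satisfies $\mathcal{U}\ge_C\mathbb{B}(X)$, then $\mathcal{U}$ and $\mathbb{B}(X)$, regarded as finite $T_0$ spaces (posets under inclusion), are homotopy equivalent.
   Context: For a finite topological space $X$ and $x\in X$, $U_x$ is the intersection of all open sets containing $x$. Finite $T_0$ spaces are identified with finite posets (via $x\le y$ iff $U_x\subseteq U_y$; open sets are down-sets), continuous maps with order-preserving maps. Any finite family of sets ordered by inclusion is regarded as a finite poset, hence a finite $T_0$ space. An open cover $\mathcal{U}$ of $X$ is basis-like if whenever $x\in U\cap V$ with $U,V\in\mathcal{U}$ there is $W\in\mathcal{U}$ with $x\in W\subseteq U\cap V$. For a finite $T_0$ space $X$, $Cov(X)$ is the set of all finite basis-like open covers of $X$. For $\mathcal{U},\mathcal{V}\in Cov(X)$ we write $\mathcal{U}\ge_C\mathcal{V}$ iff $\mathcal{U}$ refines $\mathcal{V}$ and there exists a continuous (i.e. inclusion-order-preserving) map $p_{\mathcal{V},\mathcal{U}}:\mathcal{U}\to\mathcal{V}$ with $U\subseteq p_{\mathcal{V},\mathcal{U}}(U)$ for every $U\in\mathcal{U}$. *)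

theory Defs
  imports "HOL-Analysis.Analysis"
begin

definition minimal_open :: "'a topology \<Rightarrow> 'a \<Rightarrow> 'a set" where
  "minimal_open T x = \<Inter> {V. openin T V \<and> x \<in> V}"

definition minimal_basis :: "'a topology \<Rightarrow> 'a set set" where
  "minimal_basis T = {minimal_open T x | x. x \<in> topspace T}"

definition basis_like :: "'a topology \<Rightarrow> 'a set set \<Rightarrow> bool" where
  "basis_like T \<U> \<longleftrightarrow>
     (\<forall>U\<in>\<U>. openin T U) \<and> \<Union>\<U> = topspace T \<and>
     (\<forall>U\<in>\<U>. \<forall>V\<in>\<U>. \<forall>x\<in>U \<inter> V. \<exists>W\<in>\<U>. x \<in> W \<and> W \<subseteq> U \<inter> V)"

definition Cov :: "'a topology \<Rightarrow> 'a set set set" where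
  "Cov T = {\<U>. finite \<U> \<and> basis_like T \<U>}"

definition refines :: "'a set set \<Rightarrow> 'a set set \<Rightarrow> bool" where
  "refines \<U> \<V> \<longleftrightarrow> (\<forall>U\<in>\<U>. \<exists>V\<in>\<V>. U \<subseteq> V)"

text \<open>U >=_C V: U refines V and there is an inclusion-preserving
  (i.e. continuous) map p : U -> V with U \<subseteq> p U.\<close>
definition cov_ge :: "'a set set \<Rightarrow> 'a set set \<Rightarrow> bool" where
  "cov_ge \<U> \<V> \<longleftrightarrow> refines \<U> \<V> \<and>
     (\<exists>p. p ` \<U> \<subseteq> \<V> \<and> (\<forall>U\<in>\<U>. \<forall>U'\<in>\<U>. U \<subseteq> U' \<longrightarrow> p U \<subseteq> p U') \<and>
          (\<forall>U\<in>\<U>. U \<subseteq> p U))"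

text \<open>A family of sets regarded as a finite T0 space: the poset under
  inclusion with the Alexandrov topology whose open sets are the down-sets.\<close>
definition family_topology :: "'a set set \<Rightarrow> 'a set topology" where
  "family_topology \<A> = topology (\<lambda>S. S \<subseteq> \<A> \<and> (\<forall>A\<in>S. \<forall>B\<in>\<A>. B \<subseteq> A \<longrightarrow> B \<in> S))"

lemma istopology_family:
  "istopology (\<lambda>S. S \<subseteq> \<A> \<and> (\<forall>A\<in>S. \<forall>B\<in>\<A>. B \<subseteq> A \<longrightarrow> B \<in> S))"
  unfolding istopology_def by blast

lemma openin_family_topology:
  "openin (family_topology \<A>) S \<longleftrightarrow> S \<subseteq> \<A> \<and> (\<forall>A\<in>S. \<forall>B\<in>\<A>. B \<subseteq> A \<longrightarrow> B \<in> S)"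
  unfolding family_topology_def
  by (simp add: topology_inverse'[OF istopology_family])

lemma topspace_family_topology: "topspace (family_topology \<A>) = \<A>"
  unfolding topspace_def openin_family_topology by blast

end

theory Submission
  imports Defs
begin

text \<open>The map p of U \<ge>_C B(X) and the map q sending U_x to the least member of the
  cover containing x (it exists because the cover is finite and basis-like) are monotone
  and both enlarge sets, so q \<circ> p and p \<circ> q lie above the identities. In an Alexandrov
  space two comparable continuous maps are homotopic, via the homotopy that equals the
  smaller map on [0,1) and the larger one at time 1.\<close>

lemma openin_family_topology_down_closed:
  "openin (family_topology \<B>) S \<Longrightarrow> C \<in> S \<Longrightarrow> D \<in> \<B> \<Longrightarrow> D \<subseteq> C \<Longrightarrow> D \<in> S"
  by (simp add: openin_family_topology)

lemma continuous_map_family_topologyI: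
  assumes "f ` \<A> \<subseteq> \<B>" and mono: "\<forall>A\<in>\<A>. \<forall>A'\<in>\<A>. A \<subseteq> A' \<longrightarrow> f A \<subseteq> f A'"
  shows "continuous_map (family_topology \<A>) (family_topology \<B>) f"
  unfolding continuous_map_def topspace_family_topology
proof (intro conjI allI impI)
  show "f \<in> \<A> \<rightarrow> \<B>"
    using assms(1) by auto
  fix S assume "openin (family_topology \<B>) S"
  then have "f A \<in> S" if "A' \<in> \<A>" "f A' \<in> S" "A \<in> \<A>" "A \<subseteq> A'" for A A'
    using openin_family_topology_down_closed[of \<B> S "f A'" "f A"] assms(1) mono that by auto
  then show "openin (family_topology \<A>) {A \<in> \<A>. f A \<in> S}"
    unfolding openin_family_topology by blast
qed

lemma homotopic_with_family_topology_le:
  assumes f: "f ` \<A> \<subseteq> \<B>" "\<forall>A\<in>\<A>. \<forall>A'\<in>\<A>. A \<subseteq> A' \<longrightarrow> f A \<subseteq> f A'"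
    and g: "g ` \<A> \<subseteq> \<B>" "\<forall>A\<in>\<A>. \<forall>A'\<in>\<A>. A \<subseteq> A' \<longrightarrow> g A \<subseteq> g A'"
    and le: "\<forall>A\<in>\<A>. f A \<subseteq> g A"
  shows "homotopic_with (\<lambda>h. True) (family_topology \<A>) (family_topology \<B>) f g"
proof -
  define h where "h = (\<lambda>(t::real, A). if t = 1 then g A else f A)"
  let ?I = "top_of_set {0..1::real}"
  have "continuous_map (prod_topology ?I (family_topology \<A>)) (family_topology \<B>) h"
    unfolding continuous_map_def
  proof (intro conjI allI impI)
    show "h \<in> topspace (prod_topology ?I (family_topology \<A>)) \<rightarrow> topspace (family_topology \<B>)"
      using f g by (auto simp: h_def topspace_family_topology image_subset_iff)
  next
    fix S assume S: "openin (family_topology \<B>) S"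
    let ?F = "{A\<in>\<A>. f A \<in> S}" and ?G = "{A\<in>\<A>. g A \<in> S}"
    have F: "openin (family_topology \<A>) ?F"
      using openin_continuous_map_preimage[OF continuous_map_family_topologyI[OF f] S]
      by (simp add: topspace_family_topology)
    have G: "openin (family_topology \<A>) ?G"
      using openin_continuous_map_preimage[OF continuous_map_family_topologyI[OF g] S]
      by (simp add: topspace_family_topology)
    have "?G \<subseteq> ?F"
    proof
      fix A assume "A \<in> ?G"
      then show "A \<in> ?F"
        using openin_family_topology_down_closed[OF S, of "g A" "f A"] f(1) le by auto
    qed
    then have preimage: "{z \<in> topspace (prod_topology ?I (family_topology \<A>)). h z \<in> S}
        = {0..<1} \<times> ?F \<union> {0..1} \<times> ?G"
      by (auto simp: h_def topspace_family_topology split: if_splits)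
    have "{0..<1::real} = {0..1} \<inter> {..<1}" by auto
    then have "openin ?I {0..<1}"
      by (metis openin_open_Int open_lessThan Int_commute)
    moreover have "openin ?I {0..1}" by simp
    ultimately show "openin (prod_topology ?I (family_topology \<A>))
        {z \<in> topspace (prod_topology ?I (family_topology \<A>)). h z \<in> S}"
      unfolding preimage
      by (intro openin_Un openin_prod_Times_iff[THEN iffD2] disjI2 conjI F G)
  qed
  moreover have "\<forall>A. h (0, A) = f A" "\<forall>A. h (1, A) = g A" by (auto simp: h_def)
  ultimately show ?thesis unfolding homotopic_with_def by blast
qed

lemma homotopy_equivalent_family_topology:
  assumes p: "p ` \<A> \<subseteq> \<B>" "\<forall>A\<in>\<A>. \<forall>A'\<in>\<A>. A \<subseteq> A' \<longrightarrow> p A \<subseteq> p A'" "\<forall>A\<in>\<A>. A \<subseteq> p A"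
    and q: "q ` \<B> \<subseteq> \<A>" "\<forall>B\<in>\<B>. \<forall>B'\<in>\<B>. B \<subseteq> B' \<longrightarrow> q B \<subseteq> q B'" "\<forall>B\<in>\<B>. B \<subseteq> q B"
  shows "family_topology \<A> homotopy_equivalent_space family_topology \<B>"
  unfolding homotopy_equivalent_space_def
proof (intro exI conjI)
  show "continuous_map (family_topology \<A>) (family_topology \<B>) p"
    using p by (intro continuous_map_family_topologyI) auto
  show "continuous_map (family_topology \<B>) (family_topology \<A>) q"
    using q by (intro continuous_map_family_topologyI) auto
  have "(q \<circ> p) ` \<A> \<subseteq> \<A>" "\<forall>A\<in>\<A>. \<forall>A'\<in>\<A>. A \<subseteq> A' \<longrightarrow> (q \<circ> p) A \<subseteq> (q \<circ> p) A'"
    "\<forall>A\<in>\<A>. id A \<subseteq> (q \<circ> p) A"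
    using p q by (simp_all add: image_subset_iff) (meson subset_trans)
  then have "homotopic_with (\<lambda>h. True) (family_topology \<A>) (family_topology \<A>) id (q \<circ> p)"
    by (intro homotopic_with_family_topology_le) auto
  then show "homotopic_with (\<lambda>h. True) (family_topology \<A>) (family_topology \<A>) (q \<circ> p) id"
    by (rule homotopic_with_sym[THEN iffD1])
  have "(p \<circ> q) ` \<B> \<subseteq> \<B>" "\<forall>B\<in>\<B>. \<forall>B'\<in>\<B>. B \<subseteq> B' \<longrightarrow> (p \<circ> q) B \<subseteq> (p \<circ> q) B'"
    "\<forall>B\<in>\<B>. id B \<subseteq> (p \<circ> q) B"
    using p q by (simp_all add: image_subset_iff) (meson subset_trans)
  then have "homotopic_with (\<lambda>h. True) (family_topology \<B>) (family_topology \<B>) id (p \<circ> q)"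
    by (intro homotopic_with_family_topology_le) auto
  then show "homotopic_with (\<lambda>h. True) (family_topology \<B>) (family_topology \<B>) (p \<circ> q) id"
    by (rule homotopic_with_sym[THEN iffD1])
qed

lemma minimal_open_subset: "openin X V \<Longrightarrow> x \<in> V \<Longrightarrow> minimal_open X x \<subseteq> V"
  unfolding minimal_open_def by blast

lemma in_minimal_open: "x \<in> topspace X \<Longrightarrow> x \<in> minimal_open X x"
  unfolding minimal_open_def by blast

lemma basis_likeD:
  assumes "basis_like X \<U>"
  shows "\<And>U. U \<in> \<U> \<Longrightarrow> openin X U" and "\<Union>\<U> = topspace X"
    and "\<And>U V x. U \<in> \<U> \<Longrightarrow> V \<in> \<U> \<Longrightarrow> x \<in> U \<Longrightarrow> x \<in> V \<Longrightarrow> \<exists>W\<in>\<U>. x \<in> W \<and> W \<subseteq> U \<inter> V"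
  using assms unfolding basis_like_def by auto

lemma basis_like_least_member:
  assumes "finite \<U>" "basis_like X \<U>" "x \<in> topspace X"
  obtains W where "W \<in> \<U>" "x \<in> W" "\<And>V. V \<in> \<U> \<Longrightarrow> x \<in> V \<Longrightarrow> W \<subseteq> V"
proof -
  have "{W\<in>\<U>. x \<in> W} \<noteq> {}"
    using basis_likeD(2)[OF assms(2)] assms(3) by auto
  then obtain W where W: "W \<in> \<U>" "x \<in> W"
    and min: "\<And>V. V \<in> \<U> \<Longrightarrow> x \<in> V \<Longrightarrow> V \<subseteq> W \<Longrightarrow> V = W"
    using finite_has_minimal[of "{W\<in>\<U>. x \<in> W}"] assms(1) by auto
  have least: "W \<subseteq> V" if V: "V \<in> \<U>" "x \<in> V" for V
  proof -
    obtain W' where "W' \<in> \<U>" "x \<in> W'" "W' \<subseteq> W \<inter> V"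
      using basis_likeD(3)[OF assms(2) W(1) V(1) W(2) V(2)] by blast
    with min show ?thesis by blast
  qed
  show thesis using least by (rule that[OF W])
qed

lemma Inter_cover_members_above_minimal_open:
  assumes "finite \<U>" "basis_like X \<U>" "x \<in> topspace X"
  shows "\<Inter>{V\<in>\<U>. minimal_open X x \<subseteq> V} \<in> \<U>"
proof -
  obtain W where W: "W \<in> \<U>" "x \<in> W" and least: "\<And>V. V \<in> \<U> \<Longrightarrow> x \<in> V \<Longrightarrow> W \<subseteq> V"
    using basis_like_least_member[OF assms] by blast
  have "openin X W"
    by (rule basis_likeD(1)[OF assms(2) W(1)])
  then have "minimal_open X x \<subseteq> W"
    using W(2) by (rule minimal_open_subset)
  moreover have "W \<subseteq> V" if "V \<in> \<U>" "minimal_open X x \<subseteq> V" for V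
    using least that in_minimal_open[OF assms(3)] by blast
  ultimately have "\<Inter>{V\<in>\<U>. minimal_open X x \<subseteq> V} = W"
    using W(1) by blast
  with W(1) show ?thesis by simp
qed

theorem proposition3p3:
  fixes X :: "'a topology" and \<U> :: "'a set set"
  assumes "finite (topspace X)"
    and "t0_space X"
    and "\<U> \<in> Cov X"
    and "cov_ge \<U> (minimal_basis X)"
  shows "family_topology \<U> homotopy_equivalent_space family_topology (minimal_basis X)"
proof -
  have cover: "finite \<U>" "basis_like X \<U>"
    using assms(3) by (auto simp: Cov_def)
  obtain p where p: "p ` \<U> \<subseteq> minimal_basis X"
      "\<forall>U\<in>\<U>. \<forall>U'\<in>\<U>. U \<subseteq> U' \<longrightarrow> p U \<subseteq> p U'" "\<forall>U\<in>\<U>. U \<subseteq> p U"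
    using assms(4) unfolding cov_ge_def by (elim conjE exE)
  define q where "q B = \<Inter>{V\<in>\<U>. B \<subseteq> V}" for B
  have q_into: "q ` minimal_basis X \<subseteq> \<U>"
    using Inter_cover_members_above_minimal_open[OF cover]
    by (auto simp: q_def minimal_basis_def)
  have q_mono: "\<forall>B\<in>minimal_basis X. \<forall>B'\<in>minimal_basis X. B \<subseteq> B' \<longrightarrow> q B \<subseteq> q B'"
    and q_above: "\<forall>B\<in>minimal_basis X. B \<subseteq> q B"
    by (auto simp: q_def)
  show ?thesis
    by (rule homotopy_equivalent_family_topology[OF p q_into q_mono q_above])
qed

end
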